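(* Let $q$ be a prime power, $1\le k$, $d\ge1$, $k+d<n\le m$, let $g_1,\dots,g_n\in\mathbb{F}_{q^m}$ be linearly independent over $\mathbb{F}_q$, and let $\mathcal{G}$ be the Gabidulin code of dimension $k$ with respect to $g_1,\dots,g_n$. Let $$f(x)=x^{q^{k+d}}-a_1x^{q^{k+d-1}}+a_2x^{q^{k+d-2}}-\cdots+(-1)^da_dx^{q^k}+\sum_{i=0}^{k-1}c_ix^{q^i}$$ with $a_j,c_i\in\mathbb{F}_{q^m}$, and $\sigma_f=(f(g_1),\dots,f(g_n))$. Then $d_R(\sigma_f,\mathcal{G})=n-(k+d)$ if and only if there exist $\mathbb{F}_q$-linearly independent $\beta_1,\dots,\beta_{k+d}\in\langle g_1,\dots,g_n\rangle$ such that for all $1\le i\le d$, $$a_i=\frac{\det\mathcal{R}_{k+d-i}(\beta_1,\dots,\beta_{k+d})}{\det M_{k+d}(\beta_1,\dots,\beta_{k+d})}.$$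
   Context: For $\beta_1,\dots,\beta_s\in\mathbb{F}_{q^m}$, the $t\times s$ Moore matrix $M_t(\beta_1,\dots,\beta_s)$ has $(i,j)$ entry $\beta_j^{q^{i-1}}$, $1\le i\le t$. For $0\le j\le s$, $\mathcal{R}_j(\beta_1,\dots,\beta_s)$ denotes the $s\times s$ matrix obtained from $M_{s+1}(\beta_1,\dots,\beta_s)$ by deleting the row $(\beta_1^{q^j},\dots,\beta_s^{q^j})$. $\mathcal{L}_q(x,\mathbb{F}_{q^m})$ is the set of $q$-linearized polynomials $\sum_i a_ix^{q^i}$ over $\mathbb{F}_{q^m}$, $q$-degree being the largest $i$ with $a_i\ne0$. Rank distance: $d_R(\mathbf{u},\mathbf{v})=\dim_{\mathbb{F}_q}\langle u_1-v_1,\dots,u_n-v_n\rangle$, $d_R(\mathbf{u},C)=\min_{\mathbf{c}\in C}d_R(\mathbf{u},\mathbf{c})$. The Gabidulin code of dimension $k$ is $\mathcal{G}=\{(v(g_1),\dots,v(g_n)) : v\in\mathcal{L}_q(x,\mathbb{F}_{q^m}),\ v=0\text{ or }\deg_q(v)<k\}$. *)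

theory Defs
  imports Main "HOL-Computational_Algebra.Primes" "Jordan_Normal_Form.Determinant"
begin

text \<open>Ambient field F_{q^m} is a finite field type 'a with CARD('a) = q^m.
  The subfield F_q is the set of fixed points of the q-Frobenius.
  Vectors/families are functions nat => 'a, indexed from 0.\<close>

definition prime_power :: "nat \<Rightarrow> bool" where
  "prime_power q \<longleftrightarrow> (\<exists>p e. prime p \<and> 0 < e \<and> q = p ^ e)"

definition Fq :: "nat \<Rightarrow> 'a::field set" where
  "Fq q = {x. x ^ q = x}"

definition lin_indep_Fq :: "nat \<Rightarrow> (nat \<Rightarrow> 'a::field) \<Rightarrow> nat \<Rightarrow> bool" where
  "lin_indep_Fq q v r \<longleftrightarrow>
     (\<forall>c. (\<forall>i<r. c i \<in> Fq q) \<longrightarrow> (\<Sum>i<r. c i * v i) = 0 \<longrightarrow> (\<forall>i<r. c i = 0))"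

definition span_Fq :: "nat \<Rightarrow> (nat \<Rightarrow> 'a::field) \<Rightarrow> nat \<Rightarrow> 'a set" where
  "span_Fq q v r = {\<Sum>i<r. c i * v i | c. \<forall>i<r. c i \<in> Fq q}"

definition dim_Fq :: "nat \<Rightarrow> 'a::{finite,field} set \<Rightarrow> nat" where
  "dim_Fq q V = Max {r. \<exists>b. (\<forall>i<r. b i \<in> V) \<and> lin_indep_Fq q b r}"

definition rank_dist :: "nat \<Rightarrow> nat \<Rightarrow> (nat \<Rightarrow> 'a::{finite,field}) \<Rightarrow> (nat \<Rightarrow> 'a) \<Rightarrow> nat" where
  "rank_dist q n u v = dim_Fq q (span_Fq q (\<lambda>i. u i - v i) n)"

definition rank_dist_code :: "nat \<Rightarrow> nat \<Rightarrow> (nat \<Rightarrow> 'a::{finite,field}) \<Rightarrow> (nat \<Rightarrow> 'a) set \<Rightarrow> nat" where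
  "rank_dist_code q n u C = Min (rank_dist q n u ` C)"

definition lin_poly_eval :: "nat \<Rightarrow> nat \<Rightarrow> (nat \<Rightarrow> 'a::field) \<Rightarrow> 'a \<Rightarrow> 'a" where
  "lin_poly_eval q N a x = (\<Sum>i<N. a i * x ^ (q ^ i))"

definition gabidulin :: "nat \<Rightarrow> nat \<Rightarrow> nat \<Rightarrow> (nat \<Rightarrow> 'a::field) \<Rightarrow> (nat \<Rightarrow> 'a) set" where
  "gabidulin q n k g =
     {(\<lambda>i. if i < n then lin_poly_eval q k v (g i) else 0) | v. True}"

definition moore_mat :: "nat \<Rightarrow> nat \<Rightarrow> nat \<Rightarrow> (nat \<Rightarrow> 'a::field) \<Rightarrow> 'a mat" where
  "moore_mat q t s b = mat t s (\<lambda>(i, j). b j ^ (q ^ i))"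

text \<open>R_j(b_1..b_s): delete the row with exponent q^j from the (s+1) x s Moore matrix.\<close>
definition moore_del :: "nat \<Rightarrow> nat \<Rightarrow> nat \<Rightarrow> (nat \<Rightarrow> 'a::field) \<Rightarrow> 'a mat" where
  "moore_del q j s b = mat s s (\<lambda>(i, l). b l ^ (q ^ (if i < j then i else Suc i)))"

end

theory Submission
  imports Defs "HOL-Computational_Algebra.Polynomial" "HOL-Library.FuncSet"
    "HOL-Number_Theory.Residues"
begin

text \<open>For a codeword given by a linearized polynomial v of q-degree < k, the difference
  between \<sigma>_f and the codeword is the evaluation vector of the monic linearized polynomial
  f - v of q-degree s = k + d. By rank-nullity its rank is n minus the F_q-dimension of the
  kernel of f - v on \<langle>g\<rangle>, and this kernel has at most q^s elements. Hence
  d_R(\<sigma>_f, G) \<ge> n - s, with equality iff some f - v vanishes on an s-dimensional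
  subspace \<langle>\<beta>\<rangle> \<subseteq> \<langle>g\<rangle>. A monic linearized polynomial of q-degree s vanishing on \<langle>\<beta>\<rangle>
  is unique: it is the subspace polynomial det M_{s+1}(\<beta>, x) / det M_s(\<beta>), whose coefficients
  are the signed ratios det R_j(\<beta>) / det M_s(\<beta>) by cofactor expansion along the last column.
  Since v only changes the coefficients below k, equality holds iff the top d coefficients
  of f are those of the subspace polynomial of some such \<beta>.\<close>

section \<open>The q-Frobenius and linearized polynomials\<close>

locale frobenius =
  fixes q :: nat and F :: "'a::{finite,field} set"
  assumes F_def: "F = Fq q"
    and q_ge_2: "2 \<le> q"
    and add_power_q: "\<And>x y::'a. (x + y) ^ q = x ^ q + y ^ q"
begin

lemma add_power_q_pow: "(x + y :: 'a) ^ (q ^ i) = x ^ (q ^ i) + y ^ (q ^ i)"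
  by (induction i) (simp_all add: power_mult add_power_q mult.commute[of q])

lemma zero_power_q_pow: "(0::'a) ^ (q ^ i) = 0"
  using q_ge_2 by simp

lemma minus_power_q_pow: "(- x :: 'a) ^ (q ^ i) = - (x ^ (q ^ i))"
  using add_power_q_pow[of x "- x" i] zero_power_q_pow[of i]
  by (simp add: eq_neg_iff_add_eq_0 add.commute)

lemma diff_power_q_pow: "(x - y :: 'a) ^ (q ^ i) = x ^ (q ^ i) - y ^ (q ^ i)"
  using add_power_q_pow[of x "- y" i] minus_power_q_pow[of y i] by simp

lemma F_power_q_pow: "c \<in> F \<Longrightarrow> c ^ (q ^ i) = c"
  by (induction i) (simp_all add: power_mult F_def Fq_def mult.commute[of q])

lemma mult_power_q_pow_F: "c \<in> F \<Longrightarrow> (c * x) ^ (q ^ i) = c * x ^ (q ^ i)"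
  by (simp add: power_mult_distrib F_power_q_pow)

lemma F_zero [simp]: "0 \<in> F"
  using q_ge_2 by (simp add: F_def Fq_def)

lemma F_one [simp]: "1 \<in> F"
  by (simp add: F_def Fq_def)

lemma F_add: "a \<in> F \<Longrightarrow> b \<in> F \<Longrightarrow> a + b \<in> F"
  by (simp add: F_def Fq_def add_power_q)

lemma F_uminus: "a \<in> F \<Longrightarrow> - a \<in> F"
  using minus_power_q_pow[of a 1] by (simp add: F_def Fq_def)

lemma F_diff: "a \<in> F \<Longrightarrow> b \<in> F \<Longrightarrow> a - b \<in> F"
  using F_add[of a "- b"] F_uminus[of b] by simp

lemma F_mult: "a \<in> F \<Longrightarrow> b \<in> F \<Longrightarrow> a * b \<in> F"
  by (simp add: F_def Fq_def power_mult_distrib)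

lemma F_divide: "a \<in> F \<Longrightarrow> b \<in> F \<Longrightarrow> a / b \<in> F"
  by (simp add: F_def Fq_def power_divide)

lemma lin_poly_eval_add:
  "lin_poly_eval q N e (x + y :: 'a) = lin_poly_eval q N e x + lin_poly_eval q N e y"
  by (simp add: lin_poly_eval_def add_power_q_pow distrib_left sum.distrib)

lemma lin_poly_eval_zero: "lin_poly_eval q N e (0::'a) = 0"
  by (simp add: lin_poly_eval_def zero_power_q_pow)

lemma lin_poly_eval_mult_F:
  "c \<in> F \<Longrightarrow> lin_poly_eval q N e (c * x :: 'a) = c * lin_poly_eval q N e x"
  by (simp add: lin_poly_eval_def mult_power_q_pow_F sum_distrib_left mult.left_commute)

lemma lin_poly_eval_lincomb:
  "(\<And>i. i \<in> A \<Longrightarrow> c i \<in> F) \<Longrightarrow>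
    lin_poly_eval q N e (\<Sum>i\<in>A. c i * (b i :: 'a)) = (\<Sum>i\<in>A. c i * lin_poly_eval q N e (b i))"
  by (induction A rule: infinite_finite_induct)
    (auto simp: lin_poly_eval_zero lin_poly_eval_add lin_poly_eval_mult_F)

lemma card_lin_poly_roots_le:
  assumes "i < N" "e i \<noteq> 0"
  shows "card {x::'a. lin_poly_eval q N e x = 0} \<le> q ^ (N - 1)"
proof -
  define p where "p = (\<Sum>j<N. Polynomial.monom (e j) (q ^ j))"
  have poly_p: "poly p x = lin_poly_eval q N e x" for x
    by (simp add: p_def lin_poly_eval_def poly_sum poly_monom)
  have "inj (\<lambda>j. q ^ j)"
    using q_ge_2 by (auto intro!: injI simp: power_inject_exp)
  then have "Polynomial.coeff p (q ^ i) = (\<Sum>j<N. if j = i then e j else 0)"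
    unfolding p_def coeff_sum coeff_monom by (intro sum.cong) (auto dest: injD)
  with assms have "p \<noteq> 0" by auto
  have "degree p \<le> q ^ (N - 1)"
    unfolding p_def
  proof (rule degree_sum_le)
    fix j assume "j \<in> {..<N}"
    then have "q ^ j \<le> q ^ (N - 1)"
      using q_ge_2 by (intro power_increasing) auto
    then show "degree (Polynomial.monom (e j) (q ^ j)) \<le> q ^ (N - 1)"
      using degree_monom_le order.trans by blast
  qed simp
  with card_poly_roots_bound[OF \<open>p \<noteq> 0\<close>] show ?thesis
    by (simp add: poly_p)
qed

end

text \<open>All fibres of an additive map are translates of its kernel.\<close>

lemma card_eq_card_image_mult_card_kernel:
  fixes L :: "'a::ab_group_add \<Rightarrow> 'b::ab_group_add"
  assumes "finite W"
    and add: "\<And>x y. x \<in> W \<Longrightarrow> y \<in> W \<Longrightarrow> x + y \<in> W"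
    and diff: "\<And>x y. x \<in> W \<Longrightarrow> y \<in> W \<Longrightarrow> x - y \<in> W"
    and L_add: "\<And>x y. x \<in> W \<Longrightarrow> y \<in> W \<Longrightarrow> L (x + y) = L x + L y"
  shows "card W = card (L ` W) * card {x\<in>W. L x = 0}"
proof -
  let ?K = "{x\<in>W. L x = 0}"
  have fibre: "card {x\<in>W. L x = L x0} = card ?K" if "x0 \<in> W" for x0
  proof -
    have L_diff: "L (x - x0) = L x - L x0" if "x \<in> W" for x
      using L_add[of "x - x0" x0] diff[OF \<open>x \<in> W\<close> \<open>x0 \<in> W\<close>] \<open>x0 \<in> W\<close> by simp
    have "bij_betw (\<lambda>z. z + x0) ?K {x\<in>W. L x = L x0}"
      by (rule bij_betw_byWitness[where f' = "\<lambda>x. x - x0"])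
        (use \<open>x0 \<in> W\<close> add diff L_add L_diff in auto)
    then show ?thesis by (simp add: bij_betw_same_card)
  qed
  have W: "W = (\<Union>y\<in>L ` W. {x\<in>W. L x = y})" by auto
  have "card W = (\<Sum>y\<in>L ` W. card {x\<in>W. L x = y})"
    by (subst W, rule card_UN_disjoint) (use \<open>finite W\<close> in auto)
  also have "\<dots> = (\<Sum>y\<in>L ` W. card ?K)"
    using fibre by (intro sum.cong) auto
  finally show ?thesis by simp
qed

text \<open>The library's finite_field_power_card_eq_same needs the sort finite_field, which the sort
  {finite,field} of the statement does not provide.\<close>

lemma power_card_UNIV_eq_self:
  fixes x :: "'a::{finite,field}"
  shows "x ^ card (UNIV :: 'a set) = x"
proof (cases "x = 0")
  case False
  let ?U = "UNIV - {0::'a}"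
  have "(\<Prod>y\<in>?U. x * y) = \<Prod>?U"
    by (rule prod.reindex_bij_witness[of _ "\<lambda>y. y / x" "\<lambda>y. x * y"]) (use False in auto)
  moreover have "card ?U = card (UNIV :: 'a set) - 1" by simp
  ultimately have "x ^ (card (UNIV :: 'a set) - 1) * \<Prod>?U = 1 * \<Prod>?U"
    by (simp add: prod.distrib)
  then have "x ^ (card (UNIV :: 'a set) - 1) = 1" by simp
  then show ?thesis
    using power_minus_mult[of "card (UNIV :: 'a set)" x] by (simp add: finite_UNIV_card_ge_0)
qed (simp add: finite_UNIV_card_ge_0)

text \<open>The image of x \<mapsto> x^q - x lies in the kernel of the trace x \<mapsto> \<Sum>i<m. x^(q^i); comparing
  the root bounds of both maps with |F_{q^m}| = |image| \<cdot> |kernel| forces |F_q| = q.\<close>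

lemma (in frobenius) card_F:
  assumes card_UNIV: "card (UNIV :: 'a set) = q ^ m" and "1 \<le> m"
  shows "card F = q"
proof -
  define e :: "nat \<Rightarrow> 'a" where "e = (\<lambda>j. if j = 0 then -1 else 1)"
  let ?\<phi> = "lin_poly_eval q 2 e"
  have \<phi>: "?\<phi> x = x ^ q - x" for x
    by (simp add: lin_poly_eval_def e_def numeral_2_eq_2)
  have F_kernel: "F = {x\<in>UNIV. ?\<phi> x = 0}"
    by (auto simp: F_def Fq_def \<phi>)
  have "card F \<le> q"
    using card_lin_poly_roots_le[of 1 2 e] by (simp add: e_def F_kernel)
  define T where "T = lin_poly_eval q m (\<lambda>_. 1::'a)"
  have "T (?\<phi> x) = 0" for x
  proof -
    have "T (?\<phi> x) = T (x ^ q - x)" by (simp only: \<phi>)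
    also have "\<dots> = (\<Sum>i<m. x ^ (q ^ Suc i) - x ^ (q ^ i))"
      unfolding T_def lin_poly_eval_def
      by (intro sum.cong refl) (simp add: diff_power_q_pow power_mult[symmetric] mult.commute)
    also have "\<dots> = x ^ (q ^ m) - x"
      by (subst sum_lessThan_telescope) simp
    finally show ?thesis
      using power_card_UNIV_eq_self[of x] card_UNIV by simp
  qed
  then have "card (range ?\<phi>) \<le> card {y. T y = 0}"
    by (intro card_mono) auto
  also have "\<dots> \<le> q ^ (m - 1)"
    unfolding T_def by (rule card_lin_poly_roots_le[of 0]) (use \<open>1 \<le> m\<close> in auto)
  finally have image_bound: "card (range ?\<phi>) \<le> q ^ (m - 1)" .
  have "q ^ (m - 1) * q = card (UNIV :: 'a set)"
    using power_minus_mult[of m q] \<open>1 \<le> m\<close> card_UNIV by simp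
  also have "\<dots> = card (range ?\<phi>) * card F"
    using card_eq_card_image_mult_card_kernel[of UNIV ?\<phi>] by (simp add: lin_poly_eval_add F_kernel)
  also have "\<dots> \<le> q ^ (m - 1) * card F"
    using image_bound by (rule mult_le_mono1)
  finally have "q ^ (m - 1) * q \<le> q ^ (m - 1) * card F" .
  then have "q \<le> card F" using q_ge_2 by simp
  with \<open>card F \<le> q\<close> show ?thesis by simp
qed

locale Fq_subfield = frobenius +
  assumes card_F_eq: "card F = q"

lemma Fq_subfield_if_card_prime_power:
  assumes "prime_power q" and card_UNIV: "card (UNIV :: 'a::{finite,field} set) = q ^ m"
    and "1 \<le> m"
  shows "Fq_subfield q (Fq q :: 'a set)"
proof -
  obtain p e where p: "prime p" "0 < e" "q = p ^ e"
    using \<open>prime_power q\<close> unfolding prime_power_def by blast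
  have "p \<le> q"
    using p prime_gt_0_nat[of p] power_increasing[of 1 e p] by simp
  then have "2 \<le> q"
    using prime_ge_2_nat[OF \<open>prime p\<close>] by linarith
  have "prime CHAR('a)"
    by (rule prime_CHAR_semidom) (simp add: finite_imp_CHAR_pos)
  moreover have "CHAR('a) dvd p ^ (e * m)"
    using CHAR_dvd_CARD[where 'a = 'a] card_UNIV p by (simp add: power_mult)
  ultimately have "CHAR('a) = p"
    using p(1) prime_dvd_power primes_dvd_imp_eq by blast
  then have "(x + y :: 'a) ^ q = x ^ q + y ^ q" for x y
    using \<open>prime CHAR('a)\<close> p by (intro freshmans_dream') auto
  then interpret frobenius q "Fq q :: 'a set"
    using \<open>2 \<le> q\<close> by unfold_locales auto
  show ?thesis
    by unfold_locales (rule card_F[OF card_UNIV \<open>1 \<le> m\<close>])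
qed

section \<open>Linear algebra over F_q\<close>

context Fq_subfield
begin

definition F_subspace :: "'a set \<Rightarrow> bool" where
  "F_subspace W \<longleftrightarrow> 0 \<in> W \<and> (\<forall>x\<in>W. \<forall>y\<in>W. x + y \<in> W) \<and> (\<forall>c\<in>F. \<forall>x\<in>W. c * x \<in> W)"

lemma F_subspace_zero: "F_subspace W \<Longrightarrow> 0 \<in> W"
  by (simp add: F_subspace_def)

lemma F_subspace_add: "F_subspace W \<Longrightarrow> x \<in> W \<Longrightarrow> y \<in> W \<Longrightarrow> x + y \<in> W"
  by (simp add: F_subspace_def)

lemma F_subspace_mult: "F_subspace W \<Longrightarrow> c \<in> F \<Longrightarrow> x \<in> W \<Longrightarrow> c * x \<in> W"
  by (simp add: F_subspace_def)

lemma F_subspace_diff: "F_subspace W \<Longrightarrow> x \<in> W \<Longrightarrow> y \<in> W \<Longrightarrow> x - y \<in> W"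
  using F_subspace_add[of W x "- 1 * y"] F_subspace_mult[of W "- 1" y] F_uminus[OF F_one] by simp

lemma F_subspace_lincomb:
  "F_subspace W \<Longrightarrow> (\<And>i. i \<in> A \<Longrightarrow> c i \<in> F) \<Longrightarrow> (\<And>i. i \<in> A \<Longrightarrow> b i \<in> W) \<Longrightarrow>
    (\<Sum>i\<in>A. c i * b i) \<in> W"
  by (induction A rule: infinite_finite_induct)
    (auto simp: F_subspace_zero F_subspace_add F_subspace_mult)

lemma F_subspace_kernel:
  "F_subspace W \<Longrightarrow> F_subspace {x\<in>W. lin_poly_eval q N e x = 0}"
  unfolding F_subspace_def
  by (auto simp: lin_poly_eval_zero lin_poly_eval_add lin_poly_eval_mult_F)

lemma span_Fq_eq_image:
  "span_Fq q v r = (\<lambda>c. \<Sum>i<r. c i * v i) ` (PiE {..<r} (\<lambda>_. F))"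
proof
  show "span_Fq q v r \<subseteq> (\<lambda>c. \<Sum>i<r. c i * v i) ` (PiE {..<r} (\<lambda>_. F))"
  proof
    fix x assume "x \<in> span_Fq q v r"
    then obtain c where c: "\<forall>i<r. c i \<in> F" "x = (\<Sum>i<r. c i * v i)"
      unfolding span_Fq_def F_def by auto
    show "x \<in> (\<lambda>c. \<Sum>i<r. c i * v i) ` (PiE {..<r} (\<lambda>_. F))"
      by (rule image_eqI[of _ _ "restrict c {..<r}"]) (use c in auto)
  qed
qed (auto simp: span_Fq_def F_def PiE_iff)

lemma F_subspace_span_Fq: "F_subspace (span_Fq q v r)"
  unfolding span_Fq_eq_image F_subspace_def
proof safe
  show "0 \<in> (\<lambda>c. \<Sum>i<r. c i * v i) ` (PiE {..<r} (\<lambda>_. F))"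
    by (rule image_eqI[of _ _ "\<lambda>i\<in>{..<r}. 0"]) auto
next
  fix c d assume "c \<in> PiE {..<r} (\<lambda>_. F)" "d \<in> PiE {..<r} (\<lambda>_. F)"
  then show "(\<Sum>i<r. c i * v i) + (\<Sum>i<r. d i * v i) \<in> (\<lambda>c. \<Sum>i<r. c i * v i) ` (PiE {..<r} (\<lambda>_. F))"
    by (intro image_eqI[of _ _ "\<lambda>i\<in>{..<r}. c i + d i"])
      (auto simp: F_add sum.distrib distrib_right PiE_iff)
next
  fix a c assume "a \<in> F" "c \<in> PiE {..<r} (\<lambda>_. F)"
  then show "a * (\<Sum>i<r. c i * v i) \<in> (\<lambda>c. \<Sum>i<r. c i * v i) ` (PiE {..<r} (\<lambda>_. F))"
    by (intro image_eqI[of _ _ "\<lambda>i\<in>{..<r}. a * c i"])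
      (auto simp: F_mult sum_distrib_left mult.assoc PiE_iff)
qed

lemma span_Fq_subset:
  assumes "F_subspace W" "\<And>i. i < r \<Longrightarrow> v i \<in> W"
  shows "span_Fq q v r \<subseteq> W"
proof
  fix x assume "x \<in> span_Fq q v r"
  then obtain c where c: "\<forall>i<r. c i \<in> F" and x: "x = (\<Sum>i<r. c i * v i)"
    unfolding span_Fq_def F_def by blast
  show "x \<in> W"
    unfolding x using assms c by (intro F_subspace_lincomb) auto
qed

lemma card_span_Fq:
  assumes indep: "lin_indep_Fq q (v :: nat \<Rightarrow> 'a) r"
  shows "card (span_Fq q v r) = q ^ r"
proof -
  have "inj_on (\<lambda>c. \<Sum>i<r. c i * v i) (PiE {..<r} (\<lambda>_. F))"
  proof (rule inj_onI)
    fix c d assume c: "c \<in> PiE {..<r} (\<lambda>_. F)" and d: "d \<in> PiE {..<r} (\<lambda>_. F)"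
      and eq: "(\<Sum>i<r. c i * v i) = (\<Sum>i<r. d i * v i)"
    have "(\<Sum>i<r. (c i - d i) * v i) = 0"
      using eq by (simp add: left_diff_distrib sum_subtractf)
    moreover have "\<forall>i<r. c i - d i \<in> Fq q"
      using c d F_diff unfolding F_def by (auto simp: PiE_iff)
    ultimately have "\<forall>i<r. c i - d i = 0"
      using indep[unfolded lin_indep_Fq_def, THEN spec[of _ "\<lambda>i. c i - d i"]] by blast
    then show "c = d"
      using c d by (intro PiE_ext) auto
  qed
  then have "card (span_Fq q v r) = card (PiE {..<r} (\<lambda>_. F :: 'a set))"
    by (simp add: span_Fq_eq_image card_image)
  also have "\<dots> = q ^ r"
    by (simp add: card_PiE card_F_eq)
  finally show ?thesis .
qed

lemma lin_indep_Fq_extend: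
  assumes indep: "lin_indep_Fq q (b :: nat \<Rightarrow> 'a) r" and w: "w \<notin> span_Fq q b r"
  shows "lin_indep_Fq q (b(r := w)) (Suc r)"
  unfolding lin_indep_Fq_def
proof (rule allI, intro impI)
  fix c assume c: "\<forall>i<Suc r. c i \<in> Fq q" and "(\<Sum>i<Suc r. c i * (b(r := w)) i) = 0"
  then have sum_zero: "(\<Sum>i<r. c i * b i) + c r * w = 0"
    by (simp add: sum.lessThan_Suc)
  have "c r = 0"
  proof (rule ccontr)
    assume "c r \<noteq> 0"
    then have "w = (\<Sum>i<r. (- c i / c r) * b i)"
      using sum_zero by (simp add: sum_divide_distrib[symmetric] sum_negf field_simps eq_neg_iff_add_eq_0
          sum_distrib_left[symmetric])
    moreover have "\<forall>i<r. - c i / c r \<in> Fq q"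
      using c by (auto simp: F_uminus F_divide simp flip: F_def)
    ultimately have "w \<in> span_Fq q b r"
      unfolding span_Fq_def by (intro CollectI exI[of _ "\<lambda>i. - c i / c r"]) simp
    with w show False by simp
  qed
  moreover have "\<forall>i<r. c i = 0"
    using indep c sum_zero \<open>c r = 0\<close> unfolding lin_indep_Fq_def by simp
  ultimately show "\<forall>i<Suc r. c i = 0"
    by (auto simp: less_Suc_eq)
qed

lemma lin_indep_Fq_prefix:
  assumes indep: "lin_indep_Fq q (b :: nat \<Rightarrow> 'a) r" and "s \<le> r"
  shows "lin_indep_Fq q b s"
  unfolding lin_indep_Fq_def
proof (rule allI, intro impI)
  fix c assume c: "\<forall>i<s. c i \<in> Fq q" and "(\<Sum>i<s. c i * b i) = 0"
  let ?c = "\<lambda>i. if i < s then c i else 0"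
  have "(\<Sum>i<r. ?c i * b i) = (\<Sum>i<s. ?c i * b i)"
    by (rule sum.mono_neutral_right) (use \<open>s \<le> r\<close> in auto)
  also have "\<dots> = (\<Sum>i<s. c i * b i)"
    by simp
  finally have "(\<Sum>i<r. ?c i * b i) = 0"
    using \<open>(\<Sum>i<s. c i * b i) = 0\<close> by simp
  moreover have "\<forall>i<r. ?c i \<in> Fq q"
    using c F_zero by (simp add: F_def)
  ultimately have "?c i = 0" if "i < r" for i
    using indep[unfolded lin_indep_Fq_def, rule_format, of ?c] that by blast
  then show "\<forall>i<s. c i = 0"
    using \<open>s \<le> r\<close> by (metis order.strict_trans2)
qed

lemma finite_lin_indep_Fq_lengths:
  assumes "F_subspace W"
  shows "finite {r. \<exists>b. (\<forall>i<r. b i \<in> W) \<and> lin_indep_Fq q b r}"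
proof (rule finite_subset[of _ "{..card W}"])
  show "{r. \<exists>b. (\<forall>i<r. b i \<in> W) \<and> lin_indep_Fq q b r} \<subseteq> {..card W}"
  proof
    fix r assume "r \<in> {r. \<exists>b. (\<forall>i<r. b i \<in> W) \<and> lin_indep_Fq q b r}"
    then obtain b where "\<forall>i<r. b i \<in> W" "lin_indep_Fq q b r" by blast
    then have "q ^ r \<le> card W"
      using card_span_Fq span_Fq_subset[OF assms] by (metis card_mono finite)
    moreover have "2 ^ r \<le> q ^ r"
      using q_ge_2 by (simp add: power_mono)
    ultimately have "r \<le> card W"
      using less_exp[of r] by linarith
    then show "r \<in> {..card W}" by simp
  qed
qed simp

lemma lin_indep_Fq_le_dim_Fq:
  "F_subspace W \<Longrightarrow> \<forall>i<r. b i \<in> W \<Longrightarrow> lin_indep_Fq q b r \<Longrightarrow> r \<le> dim_Fq q W"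
  unfolding dim_Fq_def using finite_lin_indep_Fq_lengths by (intro Max_ge) auto

lemma F_subspace_basis:
  assumes W: "F_subspace W"
  obtains b where "\<forall>i<dim_Fq q W. b i \<in> W" "lin_indep_Fq q b (dim_Fq q W)"
    "W = span_Fq q b (dim_Fq q W)"
proof -
  let ?r = "dim_Fq q W"
  have "0 \<in> {r. \<exists>b. (\<forall>i<r. b i \<in> W) \<and> lin_indep_Fq q b r}"
    by (simp add: lin_indep_Fq_def)
  then have "?r \<in> {r. \<exists>b. (\<forall>i<r. b i \<in> W) \<and> lin_indep_Fq q b r}"
    unfolding dim_Fq_def using finite_lin_indep_Fq_lengths[OF W] by (intro Max_in) auto
  then obtain b where b: "\<forall>i<?r. b i \<in> W" "lin_indep_Fq q b ?r"
    by auto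
  have "W \<subseteq> span_Fq q b ?r"
  proof
    fix w assume "w \<in> W"
    show "w \<in> span_Fq q b ?r"
    proof (rule ccontr)
      assume "w \<notin> span_Fq q b ?r"
      then have "lin_indep_Fq q (b(?r := w)) (Suc ?r)"
        using lin_indep_Fq_extend b(2) by blast
      moreover have "\<forall>i<Suc ?r. (b(?r := w)) i \<in> W"
        using b(1) \<open>w \<in> W\<close> by (auto simp: less_Suc_eq)
      ultimately have "Suc ?r \<le> ?r"
        by (rule lin_indep_Fq_le_dim_Fq[OF W, rotated])
      then show False by simp
    qed
  qed
  with b span_Fq_subset[OF W] show thesis
    by (intro that) auto
qed

lemma card_F_subspace:
  assumes "F_subspace W"
  shows "card W = q ^ dim_Fq q W"
proof -
  obtain b where b: "lin_indep_Fq q b (dim_Fq q W)" and W: "W = span_Fq q b (dim_Fq q W)"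
    using F_subspace_basis[OF assms] by blast
  have "card W = card (span_Fq q b (dim_Fq q W))"
    using W by (rule arg_cong)
  also have "\<dots> = q ^ dim_Fq q W"
    by (rule card_span_Fq[OF b])
  finally show ?thesis .
qed

end

section \<open>Moore determinants and subspace polynomials\<close>

text \<open>The coefficient of x^(q^j) in the subspace polynomial det M_{s+1}(b, x) / det M_s(b),
  obtained by expanding the determinant along the column of x.\<close>

definition subspace_poly_coeff :: "nat \<Rightarrow> nat \<Rightarrow> (nat \<Rightarrow> 'a::field) \<Rightarrow> nat \<Rightarrow> 'a" where
  "subspace_poly_coeff q s b j = (-1) ^ (s - j) * det (moore_del q j s b) / det (moore_mat q s s b)"

lemma moore_del_last: "moore_del q s s b = moore_mat q s s b"
  by (rule eq_matI) (auto simp: moore_del_def moore_mat_def)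

text \<open>Laplace expansion along the last column of the Moore matrix of b_0, ..., b_(s-1), b_l,
  which has two equal columns.\<close>

lemma moore_cofactor_expansion:
  assumes "l < s"
  shows "(\<Sum>i<Suc s. (b l :: 'a::field) ^ (q ^ i) * ((-1) ^ (i + s) * det (moore_del q i s b))) = 0"
proof -
  define N where "N = moore_mat q (Suc s) (Suc s) (b(s := b l))"
  have N: "N \<in> carrier_mat (Suc s) (Suc s)"
    by (simp add: N_def moore_mat_def)
  have "col N l = col N s"
    by (rule eq_vecI) (use assms in \<open>auto simp: N_def moore_mat_def\<close>)
  then have "det N = 0"
    using assms by (intro det_identical_columns[OF N, of l s]) auto
  moreover have "det N = (\<Sum>i<Suc s. N $$ (i, s) * cofactor N i s)"
    by (rule laplace_expansion_column[OF N]) simp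
  moreover have "mat_delete N i s = moore_del q i s b" for i
    by (rule eq_matI) (auto simp: mat_delete_def N_def moore_mat_def moore_del_def)
  ultimately show ?thesis
    by (simp add: cofactor_def N_def moore_mat_def)
qed

context Fq_subfield
begin

text \<open>A nonzero linearized polynomial with N coefficients has at most q^(N-1) roots, fewer than
  the q^s elements of the span of s independent vectors.\<close>

lemma lin_poly_coeffs_zero_if_vanishing:
  assumes indep: "lin_indep_Fq q (\<beta> :: nat \<Rightarrow> 'a) s" and "N \<le> s"
    and vanish: "\<And>l. l < s \<Longrightarrow> lin_poly_eval q N e (\<beta> l) = 0"
  shows "\<forall>j<N. e j = 0"
proof (rule ccontr)
  assume "\<not> (\<forall>j<N. e j = 0)"
  then obtain j where j: "j < N" "e j \<noteq> 0" by auto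
  have "F_subspace {x. lin_poly_eval q N e x = 0}"
    using F_subspace_kernel[of UNIV] by (simp add: F_subspace_def)
  then have "span_Fq q \<beta> s \<subseteq> {x. lin_poly_eval q N e x = 0}"
    using vanish by (intro span_Fq_subset) auto
  then have "q ^ s \<le> card {x. lin_poly_eval q N e x = 0}"
    using card_span_Fq[OF indep] by (metis card_mono finite)
  also have "\<dots> \<le> q ^ (N - 1)"
    by (rule card_lin_poly_roots_le[of j N e, OF j])
  also have "\<dots> < q ^ s"
    using q_ge_2 j \<open>N \<le> s\<close> by (intro power_strict_increasing) auto
  finally show False by simp
qed

lemma det_moore_mat_nonzero:
  assumes indep: "lin_indep_Fq q (\<beta> :: nat \<Rightarrow> 'a) s"
  shows "det (moore_mat q s s \<beta>) \<noteq> 0"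
proof
  let ?M = "moore_mat q s s \<beta>"
  have M: "?M \<in> carrier_mat s s" by (simp add: moore_mat_def)
  assume "det ?M = 0"
  then have "det (transpose_mat ?M) = 0" by (simp add: det_transpose[OF M])
  then obtain v where v: "v \<in> carrier_vec s" "v \<noteq> 0\<^sub>v s" "transpose_mat ?M *\<^sub>v v = 0\<^sub>v s"
    using det_0_iff_vec_prod_zero_field[of "transpose_mat ?M" s] M by auto
  have "lin_poly_eval q s (\<lambda>i. v $ i) (\<beta> l) = 0" if "l < s" for l
  proof -
    have "(transpose_mat ?M *\<^sub>v v) $ l = (\<Sum>i<s. \<beta> l ^ (q ^ i) * v $ i)"
      using that v(1) by (simp add: moore_mat_def scalar_prod_def lessThan_atLeast0)
    then show ?thesis
      using v(3) that by (simp add: lin_poly_eval_def mult.commute)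
  qed
  then have "v = 0\<^sub>v s"
    using lin_poly_coeffs_zero_if_vanishing[OF indep order.refl] v(1) by (intro eq_vecI) auto
  with v(2) show False by simp
qed

lemma subspace_poly_coeff_last:
  "lin_indep_Fq q (\<beta> :: nat \<Rightarrow> 'a) s \<Longrightarrow> subspace_poly_coeff q s \<beta> s = 1"
  using det_moore_mat_nonzero by (simp add: subspace_poly_coeff_def moore_del_last)

lemma subspace_poly_root:
  assumes indep: "lin_indep_Fq q (\<beta> :: nat \<Rightarrow> 'a) s" and "l < s"
  shows "lin_poly_eval q (Suc s) (subspace_poly_coeff q s \<beta>) (\<beta> l) = 0"
proof -
  have "(-1::'a) ^ (i + s) = (-1) ^ (s - i)" if "i < Suc s" for i
    using that by (metis add.commute le_add_diff_inverse2 less_Suc_eq_le minus_one_power_iff even_add)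
  then have "lin_poly_eval q (Suc s) (subspace_poly_coeff q s \<beta>) (\<beta> l)
      = (\<Sum>i<Suc s. \<beta> l ^ (q ^ i) * ((-1) ^ (i + s) * det (moore_del q i s \<beta>)))
        / det (moore_mat q s s \<beta>)"
    unfolding lin_poly_eval_def subspace_poly_coeff_def sum_divide_distrib
    by (intro sum.cong refl) simp
  then show ?thesis
    using moore_cofactor_expansion[OF \<open>l < s\<close>, where b = \<beta> and q = q] by simp
qed

lemma subspace_poly_unique:
  assumes indep: "lin_indep_Fq q (\<beta> :: nat \<Rightarrow> 'a) s" and "e s = 1"
    and vanish: "\<And>l. l < s \<Longrightarrow> lin_poly_eval q (Suc s) e (\<beta> l) = 0"
  shows "\<forall>j<s. e j = subspace_poly_coeff q s \<beta> j"
proof -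
  let ?c = "subspace_poly_coeff q s \<beta>"
  have "lin_poly_eval q s (\<lambda>j. e j - ?c j) (\<beta> l) = 0" if "l < s" for l
  proof -
    have "lin_poly_eval q s (\<lambda>j. e j - ?c j) (\<beta> l)
        = lin_poly_eval q (Suc s) e (\<beta> l) - lin_poly_eval q (Suc s) ?c (\<beta> l)"
      using \<open>e s = 1\<close> subspace_poly_coeff_last[OF indep]
      by (simp add: lin_poly_eval_def left_diff_distrib sum_subtractf)
    then show ?thesis
      using vanish[OF that] subspace_poly_root[OF indep that] by simp
  qed
  then show ?thesis
    using lin_poly_coeffs_zero_if_vanishing[OF indep order.refl, of "\<lambda>j. e j - ?c j"] by auto
qed

end

section \<open>Rank of evaluation vectors of linearized polynomials\<close>

context Fq_subfield
begin

lemma span_Fq_lin_poly_image: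
  "span_Fq q (\<lambda>i. lin_poly_eval q N e (g i :: 'a)) n = lin_poly_eval q N e ` span_Fq q g n"
proof (intro equalityI subsetI)
  have lincomb: "lin_poly_eval q N e (\<Sum>i<n. c i * g i) = (\<Sum>i<n. c i * lin_poly_eval q N e (g i))"
    if "\<forall>i<n. c i \<in> Fq q" for c
    using that by (intro lin_poly_eval_lincomb) (auto simp: F_def)
  {
    fix x assume "x \<in> span_Fq q (\<lambda>i. lin_poly_eval q N e (g i)) n"
    then obtain c where c: "\<forall>i<n. c i \<in> Fq q"
      and x: "x = (\<Sum>i<n. c i * lin_poly_eval q N e (g i))"
      unfolding span_Fq_def by blast
    have "(\<Sum>i<n. c i * g i) \<in> span_Fq q g n"
      using c unfolding span_Fq_def by blast
    with x lincomb[OF c] show "x \<in> lin_poly_eval q N e ` span_Fq q g n"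
      by (metis image_eqI)
  next
    fix x assume "x \<in> lin_poly_eval q N e ` span_Fq q g n"
    then obtain c where c: "\<forall>i<n. c i \<in> Fq q" and x: "x = lin_poly_eval q N e (\<Sum>i<n. c i * g i)"
      unfolding span_Fq_def by blast
    show "x \<in> span_Fq q (\<lambda>i. lin_poly_eval q N e (g i)) n"
      unfolding span_Fq_def x lincomb[OF c] using c by blast
  }
qed

lemma rank_nullity_lin_poly:
  assumes "lin_indep_Fq q (g :: nat \<Rightarrow> 'a) n"
  shows "dim_Fq q (span_Fq q (\<lambda>i. lin_poly_eval q N e (g i)) n)
    + dim_Fq q {x\<in>span_Fq q g n. lin_poly_eval q N e x = 0} = n"
proof -
  let ?S = "span_Fq q g n" and ?L = "lin_poly_eval q N e"
  let ?K = "{x\<in>?S. ?L x = 0}"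
  have S: "F_subspace ?S" by (rule F_subspace_span_Fq)
  have "q ^ n = card ?S"
    by (rule card_span_Fq[OF assms, symmetric])
  also have "\<dots> = card (?L ` ?S) * card ?K"
    by (rule card_eq_card_image_mult_card_kernel)
      (use S in \<open>auto simp: F_subspace_add F_subspace_diff lin_poly_eval_add\<close>)
  also have "card (?L ` ?S) = q ^ dim_Fq q (span_Fq q (\<lambda>i. ?L (g i)) n)"
    using card_F_subspace[OF F_subspace_span_Fq, of "\<lambda>i. ?L (g i)" n]
    by (simp add: span_Fq_lin_poly_image)
  also have "card ?K = q ^ dim_Fq q ?K"
    by (rule card_F_subspace[OF F_subspace_kernel[OF S]])
  finally show ?thesis
    using q_ge_2 by (simp add: power_add[symmetric] power_inject_exp)
qed

lemma dim_lin_poly_kernel_le: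
  assumes "e s \<noteq> 0"
  shows "dim_Fq q {x\<in>span_Fq q (g :: nat \<Rightarrow> 'a) n. lin_poly_eval q (Suc s) e x = 0} \<le> s"
proof -
  let ?K = "{x\<in>span_Fq q g n. lin_poly_eval q (Suc s) e x = 0}"
  have "q ^ dim_Fq q ?K = card ?K"
    by (rule card_F_subspace[OF F_subspace_kernel[OF F_subspace_span_Fq], symmetric])
  also have "\<dots> \<le> card {x. lin_poly_eval q (Suc s) e x = 0}"
    by (rule card_mono) auto
  also have "\<dots> \<le> q ^ s"
    using card_lin_poly_roots_le[of s "Suc s" e] assms by simp
  finally show ?thesis
    using q_ge_2 by (simp add: power_le_imp_le_exp)
qed

lemma rank_lin_poly_ge:
  assumes "lin_indep_Fq q (g :: nat \<Rightarrow> 'a) n" "e s \<noteq> 0"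
  shows "n - s \<le> dim_Fq q (span_Fq q (\<lambda>i. lin_poly_eval q (Suc s) e (g i)) n)"
  using rank_nullity_lin_poly[OF assms(1), of "Suc s" e] dim_lin_poly_kernel_le[of e s g n, OF assms(2)]
  by arith

lemma rank_lin_poly_eq_iff:
  assumes "lin_indep_Fq q (g :: nat \<Rightarrow> 'a) n" "e s \<noteq> 0" "s < n"
  shows "dim_Fq q (span_Fq q (\<lambda>i. lin_poly_eval q (Suc s) e (g i)) n) = n - s \<longleftrightarrow>
    (\<exists>\<beta>. (\<forall>i<s. \<beta> i \<in> span_Fq q g n) \<and> lin_indep_Fq q \<beta> s \<and>
      (\<forall>l<s. lin_poly_eval q (Suc s) e (\<beta> l) = 0))"
proof -
  let ?K = "{x\<in>span_Fq q g n. lin_poly_eval q (Suc s) e x = 0}"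
  have K: "F_subspace ?K"
    by (rule F_subspace_kernel[OF F_subspace_span_Fq])
  have "dim_Fq q (span_Fq q (\<lambda>i. lin_poly_eval q (Suc s) e (g i)) n) = n - s \<longleftrightarrow> s \<le> dim_Fq q ?K"
    using rank_nullity_lin_poly[OF assms(1), of "Suc s" e] dim_lin_poly_kernel_le[of e s g n, OF assms(2)]
      assms(3) by arith
  also have "\<dots> \<longleftrightarrow> (\<exists>\<beta>. (\<forall>i<s. \<beta> i \<in> ?K) \<and> lin_indep_Fq q \<beta> s)"
  proof
    assume "s \<le> dim_Fq q ?K"
    obtain b where b: "\<forall>i<dim_Fq q ?K. b i \<in> ?K" "lin_indep_Fq q b (dim_Fq q ?K)"
      using F_subspace_basis[OF K] by blast
    have "lin_indep_Fq q b s"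
      using b(2) \<open>s \<le> dim_Fq q ?K\<close> by (rule lin_indep_Fq_prefix)
    moreover have "\<forall>i<s. b i \<in> ?K"
      using b(1) \<open>s \<le> dim_Fq q ?K\<close> by (meson order.strict_trans2)
    ultimately show "\<exists>\<beta>. (\<forall>i<s. \<beta> i \<in> ?K) \<and> lin_indep_Fq q \<beta> s"
      by blast
  qed (use lin_indep_Fq_le_dim_Fq[OF K] in blast)
  finally show ?thesis by auto
qed

lemma Min_rank_lin_poly_eq_iff:
  fixes e :: "'b \<Rightarrow> nat \<Rightarrow> 'a"
  assumes "lin_indep_Fq q g n" "\<And>v. e v s \<noteq> 0" "s < n"
  shows "Min (range (\<lambda>v. dim_Fq q (span_Fq q (\<lambda>i. lin_poly_eval q (Suc s) (e v) (g i)) n))) = n - s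
    \<longleftrightarrow> (\<exists>v \<beta>. (\<forall>i<s. \<beta> i \<in> span_Fq q g n) \<and> lin_indep_Fq q \<beta> s \<and>
           (\<forall>l<s. lin_poly_eval q (Suc s) (e v) (\<beta> l) = 0))"
proof -
  let ?R = "\<lambda>v. dim_Fq q (span_Fq q (\<lambda>i. lin_poly_eval q (Suc s) (e v) (g i)) n)"
  have "?R v \<le> n" for v
    using rank_nullity_lin_poly[OF assms(1), of "Suc s" "e v"] by linarith
  then have "range ?R \<subseteq> {..n}" by auto
  then have "finite (range ?R)"
    by (rule finite_subset) simp
  moreover have "n - s \<le> ?R v" for v
    using rank_lin_poly_ge[OF assms(1), of "e v" s] assms(2) by blast
  ultimately have "Min (range ?R) = n - s \<longleftrightarrow> (\<exists>v. ?R v = n - s)"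
    by (subst Min_eq_iff) (auto simp: image_iff eq_commute)
  then show ?thesis
    using rank_lin_poly_eq_iff[OF assms(1) _ assms(3)] assms(2) by blast
qed

end

section \<open>Distance to the Gabidulin code\<close>

definition coeffs_minus_low :: "(nat \<Rightarrow> 'a::field) \<Rightarrow> nat \<Rightarrow> (nat \<Rightarrow> 'a) \<Rightarrow> nat \<Rightarrow> 'a" where
  "coeffs_minus_low cf k v j = cf j - (if j < k then v j else 0)"

lemma lin_poly_eval_coeffs_minus_low:
  assumes "k \<le> s"
  shows "lin_poly_eval q (Suc s) (coeffs_minus_low cf k v) x
    = lin_poly_eval q (Suc s) cf x - lin_poly_eval q k v x"
proof -
  have "(\<Sum>j<Suc s. (if j < k then v j else 0) * x ^ q ^ j) = (\<Sum>j<k. v j * x ^ q ^ j)"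
    using assms by (intro sum.mono_neutral_cong_right) auto
  then show ?thesis
    by (simp add: lin_poly_eval_def coeffs_minus_low_def left_diff_distrib sum_subtractf)
qed

lemma rank_dist_code_gabidulin:
  assumes "k \<le> s"
  shows "rank_dist_code q n (\<lambda>i. if i < n then lin_poly_eval q (Suc s) cf (g i) else 0)
      (gabidulin q n k g)
    = Min (range (\<lambda>v. dim_Fq q
        (span_Fq q (\<lambda>i. lin_poly_eval q (Suc s) (coeffs_minus_low cf k v) (g i)) n)))"
proof -
  have "rank_dist q n (\<lambda>i. if i < n then lin_poly_eval q (Suc s) cf (g i) else 0)
        (\<lambda>i. if i < n then lin_poly_eval q k v (g i) else 0)
      = dim_Fq q (span_Fq q (\<lambda>i. lin_poly_eval q (Suc s) (coeffs_minus_low cf k v) (g i)) n)" for v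
    unfolding rank_dist_def span_Fq_def
    by (simp add: lin_poly_eval_coeffs_minus_low[OF assms] cong: conj_cong)
  then show ?thesis
    unfolding rank_dist_code_def gabidulin_def by (simp add: image_image full_SetCompr_eq)
qed

context Fq_subfield
begin

lemma exists_low_correction_vanishing_iff:
  assumes indep: "lin_indep_Fq q (\<beta> :: nat \<Rightarrow> 'a) s" and "cf s = 1" "k \<le> s"
  shows "(\<exists>v. \<forall>l<s. lin_poly_eval q (Suc s) (coeffs_minus_low cf k v) (\<beta> l) = 0)
    \<longleftrightarrow> (\<forall>j\<in>{k..<s}. cf j = subspace_poly_coeff q s \<beta> j)"
proof
  assume "\<exists>v. \<forall>l<s. lin_poly_eval q (Suc s) (coeffs_minus_low cf k v) (\<beta> l) = 0"
  then obtain v where "\<forall>l<s. lin_poly_eval q (Suc s) (coeffs_minus_low cf k v) (\<beta> l) = 0"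
    by blast
  moreover have "coeffs_minus_low cf k v s = 1"
    using assms by (simp add: coeffs_minus_low_def)
  ultimately have "\<forall>j<s. coeffs_minus_low cf k v j = subspace_poly_coeff q s \<beta> j"
    using subspace_poly_unique[OF indep] by blast
  then show "\<forall>j\<in>{k..<s}. cf j = subspace_poly_coeff q s \<beta> j"
    by (auto simp: coeffs_minus_low_def)
next
  assume high: "\<forall>j\<in>{k..<s}. cf j = subspace_poly_coeff q s \<beta> j"
  define v where "v j = cf j - subspace_poly_coeff q s \<beta> j" for j
  have "coeffs_minus_low cf k v j = subspace_poly_coeff q s \<beta> j" if "j < Suc s" for j
    using high that \<open>cf s = 1\<close> subspace_poly_coeff_last[OF indep]
    by (cases "j < k") (auto simp: coeffs_minus_low_def v_def less_Suc_eq)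
  then have "lin_poly_eval q (Suc s) (coeffs_minus_low cf k v) x
      = lin_poly_eval q (Suc s) (subspace_poly_coeff q s \<beta>) x" for x
    unfolding lin_poly_eval_def by (intro sum.cong) auto
  then show "\<exists>v. \<forall>l<s. lin_poly_eval q (Suc s) (coeffs_minus_low cf k v) (\<beta> l) = 0"
    using subspace_poly_root[OF indep] by (intro exI[of _ v]) simp
qed

end

definition monic_coeffs :: "nat \<Rightarrow> nat \<Rightarrow> (nat \<Rightarrow> 'a::comm_ring_1) \<Rightarrow> (nat \<Rightarrow> 'a) \<Rightarrow> nat \<Rightarrow> 'a" where
  "monic_coeffs k d a c j =
    (if j = k + d then 1 else if k \<le> j then (-1) ^ (k + d - j) * a (k + d - j) else c j)"

lemma lin_poly_eval_monic_coeffs: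
  "lin_poly_eval q (Suc (k + d)) (monic_coeffs k d a c) x
    = x ^ (q ^ (k + d)) + (\<Sum>j=1..d. (-1) ^ j * a j * x ^ (q ^ (k + d - j)))
      + (\<Sum>i<k. c i * x ^ (q ^ i))"
proof -
  let ?t = "\<lambda>j. monic_coeffs k d a c j * x ^ q ^ j"
  have "lin_poly_eval q (Suc (k + d)) (monic_coeffs k d a c) x = (\<Sum>j<k + d. ?t j) + x ^ q ^ (k + d)"
    by (simp add: lin_poly_eval_def monic_coeffs_def)
  also have "(\<Sum>j<k + d. ?t j) = (\<Sum>j<k. ?t j) + (\<Sum>j=k..<k + d. ?t j)"
    by (simp add: lessThan_atLeast0 sum.atLeastLessThan_concat)
  also have "(\<Sum>j<k. ?t j) = (\<Sum>i<k. c i * x ^ (q ^ i))"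
    by (intro sum.cong) (auto simp: monic_coeffs_def)
  also have "(\<Sum>j=k..<k + d. ?t j) = (\<Sum>j=1..d. (-1) ^ j * a j * x ^ (q ^ (k + d - j)))"
    by (rule sum.reindex_bij_witness[of _ "\<lambda>i. k + d - i" "\<lambda>j. k + d - j"])
      (auto simp: monic_coeffs_def)
  finally show ?thesis by (simp add: algebra_simps)
qed

lemma monic_coeffs_eq_subspace_poly_coeff_iff:
  "(\<forall>j\<in>{k..<k + d}. monic_coeffs k d a c j = subspace_poly_coeff q (k + d) b j)
    \<longleftrightarrow> (\<forall>i\<in>{1..d}. a i = det (moore_del q (k + d - i) (k + d) b)
                          / det (moore_mat q (k + d) (k + d) b))"
proof -
  have "monic_coeffs k d a c (k + d - i) = subspace_poly_coeff q (k + d) b (k + d - i)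
      \<longleftrightarrow> a i = det (moore_del q (k + d - i) (k + d) b) / det (moore_mat q (k + d) (k + d) b)"
    if "i \<in> {1..d}" for i
  proof -
    have "k + d - i \<noteq> k + d" "k \<le> k + d - i" "k + d - (k + d - i) = i"
      using that by auto
    then show ?thesis
      by (simp add: monic_coeffs_def subspace_poly_coeff_def flip: times_divide_eq_right)
  qed
  moreover have "{k..<k + d} = (\<lambda>i. k + d - i) ` {1..d}"
  proof (intro equalityI subsetI)
    fix j assume "j \<in> {k..<k + d}"
    then show "j \<in> (\<lambda>i. k + d - i) ` {1..d}"
      by (intro image_eqI[of _ _ "k + d - j"]) auto
  qed auto
  ultimately show ?thesis by auto
qed

theorem mainTheorem8:
  fixes q m n k d :: nat
    and g :: "nat \<Rightarrow> 'a::{finite,field}"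
    and a c :: "nat \<Rightarrow> 'a"
  assumes "prime_power q"
    and "card (UNIV :: 'a set) = q ^ m"
    and "1 \<le> k" and "1 \<le> d" and "k + d < n" and "n \<le> m"
    and "lin_indep_Fq q g n"
  defines "f \<equiv> \<lambda>x::'a. x ^ (q ^ (k + d))
                  + (\<Sum>j=1..d. (-1) ^ j * a j * x ^ (q ^ (k + d - j)))
                  + (\<Sum>i<k. c i * x ^ (q ^ i))"
  shows "rank_dist_code q n (\<lambda>i. if i < n then f (g i) else 0) (gabidulin q n k g) = n - (k + d)
     \<longleftrightarrow> (\<exists>b. (\<forall>i<k+d. b i \<in> span_Fq q g n) \<and> lin_indep_Fq q b (k + d) \<and>
            (\<forall>i\<in>{1..d}. a i = det (moore_del q (k + d - i) (k + d) b)
                                / det (moore_mat q (k + d) (k + d) b)))"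
proof -
  interpret Fq_subfield q "Fq q :: 'a set"
    by (rule Fq_subfield_if_card_prime_power[OF assms(1,2)]) (use assms(5,6) in linarith)
  let ?cf = "monic_coeffs k d a c"
  have top: "?cf (k + d) = 1"
    by (simp add: monic_coeffs_def)
  have f: "f = lin_poly_eval q (Suc (k + d)) ?cf"
    by (simp add: f_def lin_poly_eval_monic_coeffs fun_eq_iff)
  have "rank_dist_code q n (\<lambda>i. if i < n then f (g i) else 0) (gabidulin q n k g) = n - (k + d)
     \<longleftrightarrow> (\<exists>v b. (\<forall>i<k+d. b i \<in> span_Fq q g n) \<and> lin_indep_Fq q b (k + d) \<and>
            (\<forall>l<k+d. lin_poly_eval q (Suc (k + d)) (coeffs_minus_low ?cf k v) (b l) = 0))"
    unfolding f rank_dist_code_gabidulin[OF le_add1]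
    using assms(5) top by (intro Min_rank_lin_poly_eq_iff assms(7)) (simp_all add: coeffs_minus_low_def)
  also have "\<dots> \<longleftrightarrow> (\<exists>b. (\<forall>i<k+d. b i \<in> span_Fq q g n) \<and> lin_indep_Fq q b (k + d) \<and>
            (\<forall>j\<in>{k..<k + d}. ?cf j = subspace_poly_coeff q (k + d) b j))"
    using exists_low_correction_vanishing_iff[where s = "k + d" and cf = ?cf and k = k, OF _ top le_add1]
    by blast
  finally show ?thesis
    by (simp only: monic_coeffs_eq_subspace_poly_coeff_iff)
qed

end
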